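(* Let $N\ge 2$ be an integer and $\tau>0$. For $t\in\{0,\tau,2\tau,\dots\}$ let $u_j^t=u(j,t)$, $j=0,\dots,N$, be defined by prescribed initial values $u(j,0)$, the Dirichlet boundary condition $u_0^t=u_N^t=0$ for all $t$, and the iteration, for $j=1,\dots,N-1$, $$u_j^{t+\tau}=u_j^t+\frac{u_j^tu_{j-1}^t}{2}\bigl(u_j^t+u_{j-1}^t-1\bigr)\bigl(u_{j-1}^t-u_j^t\bigr)+\frac{u_j^tu_{j+1}^t}{2}\bigl(u_j^t+u_{j+1}^t-1\bigr)\bigl(u_{j+1}^t-u_j^t\bigr).$$ Suppose $1/2\le u(j,0)\le 1$ for $j=1,\dots,N-1$. Then for all $t\in\{0,\tau,2\tau,\dots\}$ and all $j=1,\dots,N-1$, $$\min_{1\le i\le N-1}u(i,0)\le u(j,t)\le \max_{1\le i\le N-1}u(i,0).$$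
   Context: This is an aggregation–diffusion lattice model on the grid points $x_j=j/N$ with time step $\tau$; the value $1/2$ is the density threshold $\alpha$ separating aggregation (below) and diffusion (above). *)

theory Defs
  imports Complex_Main
begin

end

theory Submission
  imports Defs
begin

text \<open>Write one step of the scheme as \<open>u\<^sub>j + flux u\<^sub>j u\<^sub>j\<^sub>-\<^sub>1 + flux u\<^sub>j u\<^sub>j\<^sub>+\<^sub>1\<close>. For
  densities in \<open>[1/2, 1]\<close> the factor \<open>a b (a + b - 1)\<close> lies in \<open>[0, 1]\<close>, so each flux moves
  \<open>u\<^sub>j\<close> at most half-way towards its neighbour, and not at all towards a boundary zero. Two
  such half-steps towards values in \<open>[m, M]\<close> cannot leave \<open>[m, M]\<close>, so the range of the
  initial data is invariant under the iteration.\<close>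

definition flux :: "real \<Rightarrow> real \<Rightarrow> real" where
  "flux a b = a * b / 2 * (a + b - 1) * (b - a)"

lemma aggregation_factor_bounds:
  fixes a b :: real
  assumes "a \<in> {1/2..1}" "b \<in> {1/2..1}"
  shows "0 \<le> a * b * (a + b - 1)" "a * b * (a + b - 1) \<le> 1"
proof -
  have ab: "0 \<le> a * b" "a * b \<le> 1" using assms by (auto intro: mult_le_one)
  have "0 \<le> a + b - 1" "a + b - 1 \<le> 1" using assms by auto
  with ab show "0 \<le> a * b * (a + b - 1)" "a * b * (a + b - 1) \<le> 1"
    by (auto intro: mult_le_one)
qed

lemma flux_between_zero_and_half_gap:
  fixes a b :: real
  assumes "a \<in> {1/2..1}" "b \<in> {1/2..1}"
  shows "min 0 ((b - a) / 2) \<le> flux a b \<and> flux a b \<le> max 0 ((b - a) / 2)"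
proof -
  define c where "c = a * b * (a + b - 1)"
  have "0 \<le> c" "c \<le> 1" unfolding c_def using aggregation_factor_bounds[OF assms] by auto
  moreover have "flux a b = c * (b - a) / 2" by (simp add: flux_def c_def)
  ultimately show ?thesis
    using mult_left_le_one_le[of "b - a" c] mult_left_le_one_le[of "a - b" c]
      mult_nonneg_nonneg[of c "b - a"] mult_nonneg_nonneg[of c "a - b"]
    by (cases "a \<le> b") (auto simp: algebra_simps)
qed

lemma flux_bounds:
  fixes a b m M :: real
  assumes "1/2 \<le> m" "M \<le> 1" "a \<in> {m..M}" "b \<in> insert 0 {m..M}"
  shows "(m - a) / 2 \<le> flux a b \<and> flux a b \<le> (M - a) / 2"
proof (cases "b = 0")
  case True
  then show ?thesis using assms by (simp add: flux_def)
next
  case False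
  then have "b \<in> {m..M}" using assms(4) by auto
  with assms have "min 0 ((b - a) / 2) \<le> flux a b \<and> flux a b \<le> max 0 ((b - a) / 2)"
    by (intro flux_between_zero_and_half_gap) auto
  with \<open>b \<in> {m..M}\<close> assms(3) show ?thesis by (auto simp: min_def max_def split: if_splits)
qed

lemma flux_update_in_range:
  fixes a b\<^sub>1 b\<^sub>2 m M :: real
  assumes "1/2 \<le> m" "M \<le> 1" "a \<in> {m..M}"
    and "b\<^sub>1 \<in> insert 0 {m..M}" "b\<^sub>2 \<in> insert 0 {m..M}"
  shows "a + flux a b\<^sub>1 + flux a b\<^sub>2 \<in> {m..M}"
  using flux_bounds[OF assms(1-3,4)] flux_bounds[OF assms(1-3,5)] by auto

lemma flux_scheme_range_invariant:
  fixes v :: "nat \<Rightarrow> nat \<Rightarrow> real" and N :: nat and m M :: real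
  assumes "1/2 \<le> m" "M \<le> 1"
    and bdry: "\<And>n. v n 0 = 0 \<and> v n N = 0"
    and step: "\<And>n j. j \<in> {1..N-1} \<Longrightarrow>
      v (Suc n) j = v n j + flux (v n j) (v n (j - 1)) + flux (v n j) (v n (j + 1))"
    and init: "\<And>j. j \<in> {1..N-1} \<Longrightarrow> v 0 j \<in> {m..M}"
    and "j \<in> {1..N-1}"
  shows "v n j \<in> {m..M}"
  using \<open>j \<in> {1..N-1}\<close>
proof (induction n arbitrary: j)
  case 0
  then show ?case by (rule init)
next
  case (Suc n)
  have neighbour: "v n i \<in> insert 0 {m..M}" if "i \<le> N" for i
    using bdry[of n] Suc.IH[of i] that by (cases "i = 0 \<or> i = N") auto
  show ?case
    unfolding step[OF Suc.prems] using Suc.prems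
    by (intro flux_update_in_range assms(1,2) Suc.IH neighbour) auto
qed

theorem theorem3p3:
  fixes N :: nat and \<tau> :: real and u :: "real \<Rightarrow> nat \<Rightarrow> real"
  assumes "N \<ge> 2" and "\<tau> > 0"
    and bdry: "\<And>n. u (real n * \<tau>) 0 = 0 \<and> u (real n * \<tau>) N = 0"
    and iter: "\<And>n j. 1 \<le> j \<Longrightarrow> j \<le> N - 1 \<Longrightarrow>
      u (real n * \<tau> + \<tau>) j =
        u (real n * \<tau>) j
        + u (real n * \<tau>) j * u (real n * \<tau>) (j - 1) / 2
            * (u (real n * \<tau>) j + u (real n * \<tau>) (j - 1) - 1)
            * (u (real n * \<tau>) (j - 1) - u (real n * \<tau>) j)
        + u (real n * \<tau>) j * u (real n * \<tau>) (j + 1) / 2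
            * (u (real n * \<tau>) j + u (real n * \<tau>) (j + 1) - 1)
            * (u (real n * \<tau>) (j + 1) - u (real n * \<tau>) j)"
    and init: "\<And>j. 1 \<le> j \<Longrightarrow> j \<le> N - 1 \<Longrightarrow> 1/2 \<le> u 0 j \<and> u 0 j \<le> 1"
  shows "\<forall>n j. 1 \<le> j \<and> j \<le> N - 1 \<longrightarrow>
           (MIN i\<in>{1..N-1}. u 0 i) \<le> u (real n * \<tau>) j \<and>
           u (real n * \<tau>) j \<le> (MAX i\<in>{1..N-1}. u 0 i)"
proof -
  define m where "m = (MIN i\<in>{1..N-1}. u 0 i)"
  define M where "M = (MAX i\<in>{1..N-1}. u 0 i)"
  have interior: "finite {1..N-1}" "{1..N-1} \<noteq> {}" using \<open>N \<ge> 2\<close> by auto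
  have "m \<in> u 0 ` {1..N-1}" "M \<in> u 0 ` {1..N-1}"
    unfolding m_def M_def using interior by (auto intro: Min_in Max_in)
  then have range: "1/2 \<le> m" "M \<le> 1" using init by auto
  have init_range: "u 0 j \<in> {m..M}" if "j \<in> {1..N-1}" for j
    unfolding m_def M_def using interior that by auto
  have step: "u (real (Suc n) * \<tau>) j = u (real n * \<tau>) j
      + flux (u (real n * \<tau>) j) (u (real n * \<tau>) (j - 1))
      + flux (u (real n * \<tau>) j) (u (real n * \<tau>) (j + 1))" if "j \<in> {1..N-1}" for n j
  proof -
    have "real (Suc n) * \<tau> = real n * \<tau> + \<tau>" by (simp add: distrib_right)
    then show ?thesis using iter[of j n] that by (simp add: flux_def)
  qed
  have "u (real n * \<tau>) j \<in> {m..M}" if "j \<in> {1..N-1}" for n j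
    using flux_scheme_range_invariant[where v = "\<lambda>n. u (real n * \<tau>)", OF range bdry step _ that]
      init_range by simp
  then show ?thesis unfolding m_def M_def by auto
qed

end
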